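(* Let $n$ be a positive integer, $1\le k\le n$, and $w\in\mathfrak S_n$. The relation $\le_{\mathcal P_w(n,k)}$ on $\mathrm{Inv}_k(w)$ is a partial order (in particular, it is antisymmetric). Furthermore, if $X\in\mathrm{Inv}_{k+1}(w)$, then the elements of $P(X)$ form an antichain in $\mathcal P_w(n,k)$.
   Context: $\mathfrak S_n$ is the symmetric group on $[n]$. $\binom{[n]}{m}$ is the set of $m$-element subsets of $[n]$, written $[x_1,\dots,x_m]$ with $x_1<\dots<x_m$. For $X=[x_1,\dots,x_m]$, $X_i$ is $X$ with $x_i$ removed and $P(X)=\{X_1,\dots,X_m\}$. $\mathrm{Inv}_m(w)=\{[x_1,\dots,x_m]\in\binom{[n]}{m}: w^{-1}(x_1)>\dots>w^{-1}(x_m)\}$. $X\in\binom{[n]}{m}$ is an $m$-quasi-inversion of $w$ if exactly one of the pairs $[x_a,x_b]$, $a<b$, is not in $\mathrm{Inv}_2(w)$. The relation $\le_{\mathcal P_w(n,k)}$ on $\mathrm{Inv}_k(w)$ is the reflexive-transitive closure of the quasi-inversion relations: whenever $X\in\binom{[n]}{k+1}$ is a $(k+1)$-quasi-inversion with $P(X)\cap\mathrm{Inv}_k(w)=\{X_i,X_{i+1}\}$, set $X_i<X_{i+1}$ if $k-i$ is odd and $X_{i+1}<X_i$ if $k-i$ is even. $\mathcal P_w(n,k)$ denotes $\mathrm{Inv}_k(w)$ with this relation. *)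

theory Defs
  imports "HOL-Combinatorics.Permutations"
begin

text \<open>Subsets of [n] are finite sets of naturals; the i-th element (1-based) of
X = [x_1,...,x_m] is the (i-1)-th entry of the sorted list of X.\<close>

definition subsets :: "nat \<Rightarrow> nat \<Rightarrow> nat set set" where
  "subsets n m = {X. X \<subseteq> {1..n} \<and> card X = m}"

definition elt :: "nat set \<Rightarrow> nat \<Rightarrow> nat" where
  "elt X i = sorted_list_of_set X ! (i - 1)"

definition del :: "nat set \<Rightarrow> nat \<Rightarrow> nat set" where
  "del X i = X - {elt X i}"

definition Pset :: "nat set \<Rightarrow> nat set set" where
  "Pset X = {del X i | i. 1 \<le> i \<and> i \<le> card X}"

definition Inv :: "nat \<Rightarrow> nat \<Rightarrow> (nat \<Rightarrow> nat) \<Rightarrow> nat set set" where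
  "Inv n m w = {X \<in> subsets n m.
      \<forall>i. 1 \<le> i \<and> i < m \<longrightarrow> inv w (elt X i) > inv w (elt X (Suc i))}"

definition quasi_inv :: "nat \<Rightarrow> nat \<Rightarrow> (nat \<Rightarrow> nat) \<Rightarrow> nat set \<Rightarrow> bool" where
  "quasi_inv n m w X \<longleftrightarrow> X \<in> subsets n m \<and>
     card {(a, b). 1 \<le> a \<and> a < b \<and> b \<le> m \<and> {elt X a, elt X b} \<notin> Inv n 2 w} = 1"

definition gen_rel :: "nat \<Rightarrow> nat \<Rightarrow> (nat \<Rightarrow> nat) \<Rightarrow> (nat set \<times> nat set) set" where
  "gen_rel n k w = {(A, B). \<exists>X i. quasi_inv n (k + 1) w X \<and> 1 \<le> i \<and> i \<le> k \<and>
       Pset X \<inter> Inv n k w = {del X i, del X (Suc i)} \<and>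
       (if odd (k - i) then (A, B) = (del X i, del X (Suc i))
        else (A, B) = (del X (Suc i), del X i))}"

definition Prel :: "nat \<Rightarrow> nat \<Rightarrow> (nat \<Rightarrow> nat) \<Rightarrow> (nat set \<times> nat set) set" where
  "Prel n k w = {(A, B). A \<in> Inv n k w \<and> B \<in> Inv n k w \<and> (A, B) \<in> (gen_rel n k w)\<^sup>*}"

end

theory Submission
  imports Defs
begin

text \<open>
  Weight each element y of a k-subset Y by the sign (-1)^(k + r + 1), where r is the number of
  elements of Y below y, and for h : [n] \<rightarrow> \<int> put \<Phi>_h(Y) = \<Sum>_{y \<in> Y} \<plusminus> h(y).
  A generating relation comes from consecutive elements p < q of a quasi-inversion X whose
  unique non-inverted pair is (p, q); it swaps p and q, and the orientation rule of
  P_w(n,k) is exactly the one under which \<Phi>_h increases by h(q) - h(p).  So \<Phi>_h is monotone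
  along \<le>_{P_w(n,k)} whenever h is monotone for the order u \<le> v, w^{-1}(u) \<le> w^{-1}(v).
  With h the identity every step is strict, which gives antisymmetry.  For X \<in> Inv_{k+1}(w)
  and x \<noteq> y in X, the indicators of the up-set and of the down-set of x in that order vanish
  on X - {x}, because all pairs of X are inversions; then \<Phi>_h(X - {x}) = 0 while
  \<Phi>_h(X - {y}) = \<plusminus>h(x) takes both signs, so X - {x} \<le> X - {y} is impossible.
  Nothing here uses that w is a permutation.
\<close>

lemma elt_mem:
  assumes "finite X" "1 \<le> i" "i \<le> card X"
  shows "elt X i \<in> X"
proof -
  have "i - 1 < length (sorted_list_of_set X)" using assms by simp
  then show ?thesis using assms(1) unfolding elt_def by (metis nth_mem set_sorted_list_of_set)
qed

lemma elt_less_elt_iff: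
  assumes "finite X" "1 \<le> i" "i \<le> card X" "1 \<le> j" "j \<le> card X"
  shows "elt X i < elt X j \<longleftrightarrow> i < j"
proof -
  have mono: "elt X a < elt X b" if "1 \<le> a" "a < b" "b \<le> card X" for a b
  proof -
    have "sorted_wrt (<) (sorted_list_of_set X)" "length (sorted_list_of_set X) = card X"
      using assms(1) by auto
    then show ?thesis
      using that sorted_wrt_nth_less[of "(<)" "sorted_list_of_set X" "a - 1" "b - 1"]
      unfolding elt_def by simp
  qed
  show ?thesis
    using mono[of i j] mono[of j i] assms by (cases i j rule: linorder_cases) auto
qed

lemma elt_surj:
  assumes "finite X" "x \<in> X"
  obtains i where "1 \<le> i" "i \<le> card X" "x = elt X i"
proof -
  obtain j where "j < card X" "x = sorted_list_of_set X ! j"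
    using assms by (metis in_set_conv_nth length_sorted_list_of_set set_sorted_list_of_set)
  then show thesis using that[of "Suc j"] unfolding elt_def by simp
qed

lemma Pset_eq: "finite X \<Longrightarrow> Pset X = {X - {x} | x. x \<in> X}"
  unfolding Pset_def del_def by (blast elim: elt_surj intro: elt_mem)

definition rank :: "nat set \<Rightarrow> nat \<Rightarrow> nat" where
  "rank X x = card {z \<in> X. z < x}"

lemma rank_elt:
  assumes "finite X" "1 \<le> i" "i \<le> card X"
  shows "rank X (elt X i) = i - 1"
proof -
  have "{z \<in> X. z < elt X i} = elt X ` {1..<i}"
  proof (intro set_eqI iffI)
    fix z assume z: "z \<in> {z \<in> X. z < elt X i}"
    then obtain j where "1 \<le> j" "j \<le> card X" "z = elt X j"
      using assms(1) elt_surj by blast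
    then show "z \<in> elt X ` {1..<i}" using z elt_less_elt_iff[OF assms(1)] assms by auto
  next
    fix z assume "z \<in> elt X ` {1..<i}"
    then show "z \<in> {z \<in> X. z < elt X i}"
      using elt_mem[OF assms(1)] elt_less_elt_iff[OF assms(1)] assms by auto
  qed
  moreover have "inj_on (elt X) {1..<i}"
  proof (rule inj_onI)
    fix a b assume "a \<in> {1..<i}" "b \<in> {1..<i}" "elt X a = elt X b"
    then show "a = b"
      using elt_less_elt_iff[OF assms(1), of a b] elt_less_elt_iff[OF assms(1), of b a] assms
      by (cases a b rule: linorder_cases) auto
  qed
  ultimately show ?thesis unfolding rank_def by (simp add: card_image)
qed

lemma rank_Diff_singleton:
  assumes "finite X"
  shows "rank (X - {p}) c = rank X c - (if p \<in> X \<and> p < c then 1 else 0)"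
proof -
  have "{z \<in> X - {p}. z < c} = {z \<in> X. z < c} - {p}" by blast
  then show ?thesis unfolding rank_def using assms by (simp add: card_Diff_singleton_if)
qed

lemma rank_adjacent:
  assumes "finite X" "p \<in> X" "p < q" "\<forall>z \<in> X. \<not> (p < z \<and> z < q)"
  shows "rank X q = Suc (rank X p)"
proof -
  have "{z \<in> X. z < q} = insert p {z \<in> X. z < p}" using assms(2-4) by auto
  then show ?thesis unfolding rank_def using assms(1) by simp
qed

definition alt_sign :: "nat \<Rightarrow> nat \<Rightarrow> int" where
  "alt_sign k r = (if even (k + r) then -1 else 1)"

definition alt_sum :: "nat \<Rightarrow> (nat \<Rightarrow> int) \<Rightarrow> nat set \<Rightarrow> int" where
  "alt_sum k h Y = (\<Sum>y \<in> Y. alt_sign k (rank Y y) * h y)"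

lemma alt_sum_swap_adjacent:
  assumes fin: "finite X" and "p \<in> X" "q \<in> X" "p < q"
    and adj: "\<forall>z \<in> X. \<not> (p < z \<and> z < q)"
  shows "alt_sum k h (X - {q}) - alt_sum k h (X - {p}) = alt_sign k (rank X p) * (h p - h q)"
proof -
  let ?C = "X - {p, q}"
  have "rank (X - {q}) c = rank (X - {p}) c" if "c \<in> ?C" for c
  proof -
    have "p < c \<longleftrightarrow> q < c" using that adj \<open>p < q\<close> by auto
    then show ?thesis using rank_Diff_singleton[OF fin] \<open>p \<in> X\<close> \<open>q \<in> X\<close> by simp
  qed
  then have same_rest: "(\<Sum>c \<in> ?C. alt_sign k (rank (X - {q}) c) * h c)
      = (\<Sum>c \<in> ?C. alt_sign k (rank (X - {p}) c) * h c)"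
    by (intro sum.cong) auto
  have "rank (X - {q}) p = rank X p" "rank (X - {p}) q = rank X p"
    using rank_Diff_singleton[OF fin] rank_adjacent[OF assms(1,2,4,5)] assms(2-4) by auto
  moreover have "X - {q} - {p} = ?C" "X - {p} - {q} = ?C" by auto
  ultimately show ?thesis
    using same_rest fin assms(2-4) unfolding alt_sum_def
    by (simp add: sum.remove[of "X - {q}" p] sum.remove[of "X - {p}" q] algebra_simps)
qed

lemma finite_Inv: "X \<in> Inv n m w \<Longrightarrow> finite X"
  unfolding Inv_def subsets_def by (auto intro: finite_subset)

lemma Inv_inversion:
  assumes A: "A \<in> Inv n m w" and "x \<in> A" "y \<in> A" "x < y"
  shows "inv w y < inv w x"
proof -
  let ?L = "sorted_list_of_set A"
  let ?P = "\<lambda>a b. inv w b < inv w a"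
  have fin: "finite A" using finite_Inv[OF A] .
  have "card A = m" using A unfolding Inv_def subsets_def by simp
  then have "?P (?L ! j) (?L ! Suc j)" if "Suc j < length ?L" for j
    using A that fin unfolding Inv_def elt_def by auto
  then have "sorted_wrt ?P ?L"
    using sorted_wrt_iff_nth_Suc_transp[of ?P] by (auto simp: transp_def)
  moreover obtain a b
    where "1 \<le> a" "a \<le> card A" "x = elt A a" "1 \<le> b" "b \<le> card A" "y = elt A b"
    using elt_surj[OF fin] assms(2,3) by metis
  moreover from calculation have "a < b" using elt_less_elt_iff[OF fin] \<open>x < y\<close> by blast
  ultimately show ?thesis
    using sorted_wrt_nth_less[of ?P ?L "a - 1" "b - 1"] fin unfolding elt_def by simp
qed

lemma inversion_in_Inv2:
  assumes "x < y" "x \<in> {1..n}" "y \<in> {1..n}" "inv w y < inv w x"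
  shows "{x, y} \<in> Inv n 2 w"
proof -
  have "sorted_list_of_set {x, y} = [x, y]" using assms(1) by simp
  then show ?thesis using assms unfolding Inv_def subsets_def elt_def
    by (auto simp: less_Suc_eq)
qed

lemma quasi_inv_noninversion:
  assumes "quasi_inv n m w X"
  obtains x y where "x \<in> X" "y \<in> X" "x < y" "inv w x \<le> inv w y"
proof -
  have X: "X \<subseteq> {1..n}" "card X = m" and fin: "finite X"
    using assms unfolding quasi_inv_def subsets_def by (auto intro: finite_subset)
  have "{(a, b). 1 \<le> a \<and> a < b \<and> b \<le> m \<and> {elt X a, elt X b} \<notin> Inv n 2 w} \<noteq> {}"
    using assms unfolding quasi_inv_def by (metis card.empty zero_neq_one)
  then obtain a b where ab: "1 \<le> a" "a < b" "b \<le> m" "{elt X a, elt X b} \<notin> Inv n 2 w"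
    by blast
  have "elt X a \<in> X" "elt X b \<in> X" "elt X a < elt X b"
    using elt_mem[OF fin] elt_less_elt_iff[OF fin] ab X by auto
  moreover from calculation have "inv w (elt X a) \<le> inv w (elt X b)"
    using inversion_in_Inv2[of "elt X a" "elt X b" n w] ab(4) X(1) by force
  ultimately show thesis using that by blast
qed

lemma gen_rel_step:
  assumes "(A, B) \<in> gen_rel n k w"
  obtains p q where "p < q" "inv w p \<le> inv w q"
    "\<And>h. alt_sum k h B - alt_sum k h A = h q - h p"
proof -
  obtain X i where quasi: "quasi_inv n (k + 1) w X" and i: "1 \<le> i" "i \<le> k"
    and PI: "Pset X \<inter> Inv n k w = {del X i, del X (Suc i)}"
    and AB: "if odd (k - i) then (A, B) = (del X i, del X (Suc i))
        else (A, B) = (del X (Suc i), del X i)"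
    using assms unfolding gen_rel_def by blast
  have cX: "card X = k + 1" and fin: "finite X"
    using quasi unfolding quasi_inv_def subsets_def by (auto intro: finite_subset)
  define p where "p = elt X i"
  define q where "q = elt X (Suc i)"
  have pq: "p \<in> X" "q \<in> X" "p < q"
    unfolding p_def q_def using elt_mem[OF fin] elt_less_elt_iff[OF fin] i cX by auto
  have adj: "\<forall>z \<in> X. \<not> (p < z \<and> z < q)"
  proof (intro ballI notI)
    fix z assume "z \<in> X" "p < z \<and> z < q"
    moreover obtain j where "1 \<le> j" "j \<le> card X" "z = elt X j"
      using elt_surj[OF fin \<open>z \<in> X\<close>] .
    ultimately show False
      using elt_less_elt_iff[OF fin, of i j] elt_less_elt_iff[OF fin, of j "Suc i"] i cX
      unfolding p_def q_def by auto
  qed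
  have Inv_p: "X - {p} \<in> Inv n k w" and Inv_q: "X - {q} \<in> Inv n k w"
    using PI unfolding del_def p_def q_def by auto
  have noninv: "inv w p \<le> inv w q"
  proof -
    obtain x y where xy: "x \<in> X" "y \<in> X" "x < y" "inv w x \<le> inv w y"
      using quasi_inv_noninversion[OF quasi] .
    \<comment> \<open>every pair inside X - {p} or X - {q} is an inversion\<close>
    have "x = p \<or> y = p" using Inv_inversion[OF Inv_p, of x y] xy by fastforce
    moreover have "x = q \<or> y = q" using Inv_inversion[OF Inv_q, of x y] xy by fastforce
    ultimately show ?thesis using xy pq by auto
  qed
  have "alt_sign k (rank X p) = (if odd (k - i) then -1 else 1)"
    using rank_elt[OF fin, of i] i cX unfolding p_def alt_sign_def by simp
  then have "alt_sum k h B - alt_sum k h A = h q - h p" for h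
    using alt_sum_swap_adjacent[OF fin pq adj, of k h] AB unfolding del_def p_def q_def
    by (auto split: if_splits)
  with pq noninv that show thesis by blast
qed

lemma alt_sum_mono_rtrancl:
  assumes "(A, B) \<in> (gen_rel n k w)\<^sup>*"
    and mono: "\<And>u v. u < v \<Longrightarrow> inv w u \<le> inv w v \<Longrightarrow> h u \<le> h v"
  shows "alt_sum k h A \<le> alt_sum k h B"
  using assms(1)
proof (induction rule: rtrancl_induct)
  case (step B C)
  obtain p q where "p < q" "inv w p \<le> inv w q" "alt_sum k h C - alt_sum k h B = h q - h p"
    using gen_rel_step[OF step.hyps(2)] by metis
  with mono[of p q] step.IH show ?case by linarith
qed simp

lemma acyclic_gen_rel: "acyclic (gen_rel n k w)"
proof -
  let ?less = "{(A, B). alt_sum k int A < alt_sum k int B}"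
  have "gen_rel n k w \<subseteq> ?less"
  proof clarify
    fix A B assume "(A, B) \<in> gen_rel n k w"
    then obtain p q where "p < q" "alt_sum k int B - alt_sum k int A = int q - int p"
      using gen_rel_step by metis
    then show "alt_sum k int A < alt_sum k int B" by linarith
  qed
  moreover have "acyclic ?less"
    unfolding acyclic_def by (subst trancl_id) (auto intro: transI)
  ultimately show ?thesis by (rule acyclic_subset[rotated])
qed

lemma partial_order_on_Prel: "partial_order_on (Inv n k w) (Prel n k w)"
  unfolding partial_order_on_def preorder_on_def
proof (intro conjI)
  show "Prel n k w \<subseteq> Inv n k w \<times> Inv n k w" "refl_on (Inv n k w) (Prel n k w)"
    unfolding Prel_def refl_on_def by auto
  show "trans (Prel n k w)" unfolding Prel_def trans_def by (auto intro: rtrancl_trans)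
  have "Prel n k w \<subseteq> (gen_rel n k w)\<^sup>*" unfolding Prel_def by auto
  then show "antisym (Prel n k w)"
    using acyclic_impl_antisym_rtrancl[OF acyclic_gen_rel] by (rule antisym_subset)
qed

lemma alt_sum_single_support:
  assumes "finite Z" "\<And>z. z \<in> Z \<Longrightarrow> z \<noteq> x \<Longrightarrow> h z = 0"
  shows "alt_sum k h Z = (if x \<in> Z then alt_sign k (rank Z x) * h x else 0)"
proof -
  have "alt_sum k h Z = (\<Sum>z \<in> Z. if z = x then alt_sign k (rank Z x) * h x else 0)"
    unfolding alt_sum_def using assms(2) by (intro sum.cong) auto
  then show ?thesis using assms(1) by simp
qed

lemma Diff_singletons_incomparable:
  assumes X: "X \<in> Inv n m w" and "x \<in> X" "y \<in> X" "x \<noteq> y"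
  shows "(X - {x}, X - {y}) \<notin> (gen_rel n k w)\<^sup>*"
proof
  assume step: "(X - {x}, X - {y}) \<in> (gen_rel n k w)\<^sup>*"
  have fin: "finite X" using finite_Inv[OF X] .
  define up where "up u = (if x \<le> u \<and> inv w x \<le> inv w u then 1 else 0 :: int)" for u
  define down where "down u = (if u \<le> x \<and> inv w u \<le> inv w x then -1 else 0 :: int)" for u
  have "\<not> (x \<le> u \<and> inv w x \<le> inv w u)" "\<not> (u \<le> x \<and> inv w u \<le> inv w x)"
    if "u \<in> X" "u \<noteq> x" for u
    using Inv_inversion[OF X] that \<open>x \<in> X\<close> by (metis leD le_neq_implies_less)+
  then have vanish: "up u = 0" "down u = 0" if "u \<in> X" "u \<noteq> x" for u
    using that unfolding up_def down_def by auto
  let ?s = "alt_sign k (rank (X - {y}) x)"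
  have "alt_sum k up (X - {x}) \<le> alt_sum k up (X - {y})"
    using step by (rule alt_sum_mono_rtrancl) (auto simp: up_def)
  moreover have "alt_sum k down (X - {x}) \<le> alt_sum k down (X - {y})"
    using step by (rule alt_sum_mono_rtrancl) (auto simp: down_def)
  moreover have "alt_sum k h (X - {x}) = 0" "alt_sum k h (X - {y}) = ?s * h x"
    if "\<And>u. u \<in> X \<Longrightarrow> u \<noteq> x \<Longrightarrow> h u = 0" for h
    using alt_sum_single_support[of "X - {x}" x h k] alt_sum_single_support[of "X - {y}" x h k]
      fin that \<open>x \<in> X\<close> \<open>x \<noteq> y\<close> by auto
  moreover have "up x = 1" "down x = -1" unfolding up_def down_def by simp_all
  ultimately show False using vanish unfolding alt_sign_def by (simp split: if_splits)
qed

theorem lemma3p5: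
  fixes n k :: nat and w :: "nat \<Rightarrow> nat"
  assumes "0 < n" and "1 \<le> k" and "k \<le> n" and "w permutes {1..n}"
  shows "partial_order_on (Inv n k w) (Prel n k w) \<and>
         (\<forall>X \<in> Inv n (k + 1) w. \<forall>Y \<in> Pset X. \<forall>Z \<in> Pset X.
            Y \<noteq> Z \<longrightarrow> (Y, Z) \<notin> Prel n k w)"
proof (intro conjI ballI impI)
  show "partial_order_on (Inv n k w) (Prel n k w)" by (rule partial_order_on_Prel)
next
  fix X Y Z assume X: "X \<in> Inv n (k + 1) w" and "Y \<in> Pset X" "Z \<in> Pset X" "Y \<noteq> Z"
  then obtain x y where "x \<in> X" "y \<in> X" "x \<noteq> y" "Y = X - {x}" "Z = X - {y}"
    using Pset_eq[OF finite_Inv[OF X]] by auto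
  then have "(Y, Z) \<notin> (gen_rel n k w)\<^sup>*" using Diff_singletons_incomparable[OF X] by blast
  then show "(Y, Z) \<notin> Prel n k w" unfolding Prel_def by blast
qed

end
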